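(* Let $W\in\mathcal A$ be a $\phi$-Lyapunov function, i.e. $W\ge 1$, $\phi:\mathbb R^+\to(0,\infty)$ is $\mathcal C^1$ and increasing (with $\phi'>0$), and there are a set $K\subset E$ and $b\ge 0$ with $LW\le -\phi(W)+b\,\mathbf 1_K$. Assume that $\mu$ satisfies a local Poincaré inequality on some set $U\supseteq K$ with constant $\kappa_U$. Then for all $g\in\mathcal A$, $$\mathrm{Var}_\mu(g)\le \max\Big(\frac{b\kappa_U}{\phi(1)},1\Big)\int\Big(1+\frac{1}{\phi'(W)}\Big)\Gamma(g)\,d\mu .$$
   Context: Standing framework: $E$ is a Polish space, $\mu$ a Borel probability measure on $E$, $L$ a $\mu$-symmetric (Markov diffusion) operator and $\mathcal A$ an algebra of bounded functions containing the constants and dense in $L^2(\mu)$ in the domain of $L$. The carré du champ is $\Gamma(f,g)=\frac12\big(L(fg)-fLg-gLf\big)$, $\Gamma(f)=\Gamma(f,f)\ge 0$; $\Gamma$ is assumed to be a derivation in each argument ($\Gamma(fg,h)=f\Gamma(g,h)+g\Gamma(f,h)$) and to satisfy the chain rule $\Gamma(\Psi(f),\Phi(g))=\Psi'(f)\Phi'(g)\Gamma(f,g)$; by symmetry $\int\Gamma(f,g)\,d\mu=-\int f\,Lg\,d\mu$. (Model case: $E=\mathbb R^n$, $d\mu=p\,dx$, $L=\Delta+\nabla\log p\cdot\nabla$, $\Gamma(f,g)=\nabla f\cdot\nabla g$, $\mathcal A$ = smooth compactly supported functions plus constants.) All integrations by parts used are assumed justified. A local Poincaré inequality on $U\subset E$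 with constant $\kappa_U$ means: for all $f\in\mathcal A$, $\int_U f^2\,d\mu\le \kappa_U\int_E\Gamma(f)\,d\mu+\frac{1}{\mu(U)}\big(\int_U f\,d\mu\big)^2$. *)

theory Defs
  imports "HOL-Probability.Probability"
begin

text \<open>This encodes the standing
      convention that all integrations by parts used are justified.\<close>

definition diffusion_framework ::
  "'a::polish_space measure \<Rightarrow> ('a \<Rightarrow> real) set \<Rightarrow> ('a \<Rightarrow> real) set
   \<Rightarrow> (('a \<Rightarrow> real) \<Rightarrow> ('a \<Rightarrow> real))
   \<Rightarrow> (('a \<Rightarrow> real) \<Rightarrow> ('a \<Rightarrow> real) \<Rightarrow> ('a \<Rightarrow> real)) \<Rightarrow> bool" where
  "diffusion_framework M A D L G \<longleftrightarrow>
     prob_space M \<and> sets M = sets borel \<and>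
     \<comment> \<open>A is an algebra of bounded measurable functions containing the constants\<close>
     (\<forall>c. (\<lambda>_. c) \<in> A) \<and>
     (\<forall>f\<in>A. \<forall>g\<in>A. (\<lambda>x. f x + g x) \<in> A \<and> (\<lambda>x. f x * g x) \<in> A) \<and>
     (\<forall>c. \<forall>f\<in>A. (\<lambda>x. c * f x) \<in> A) \<and>
     (\<forall>f\<in>A. f \<in> borel_measurable M \<and> (\<exists>B. \<forall>x\<in>space M. \<bar>f x\<bar> \<le> B)) \<and>
     \<comment> \<open>A is dense in L2(M)\<close>
     (\<forall>h\<in>borel_measurable M. integrable M (\<lambda>x. (h x)\<^sup>2) \<longrightarrow>
        (\<forall>e>0. \<exists>f\<in>A. (\<integral>x. (f x - h x)\<^sup>2 \<partial>M) < e)) \<and>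
     \<comment> \<open>A lies in the (L2-)domain of L\<close>
     (\<forall>f\<in>A. L f \<in> borel_measurable M \<and> integrable M (\<lambda>x. (L f x)\<^sup>2)) \<and>
     \<comment> \<open>Markov: L 1 = 0\<close>
     (\<forall>x\<in>space M. L (\<lambda>_. 1) x = 0) \<and>
     \<comment> \<open>mu-symmetry\<close>
     (\<forall>f\<in>A. \<forall>g\<in>A. (\<integral>x. f x * L g x \<partial>M) = (\<integral>x. g x * L f x \<partial>M)) \<and>
     \<comment> \<open>carre du champ on A\<close>
     (\<forall>f\<in>A. \<forall>g\<in>A. \<forall>x\<in>space M.
        G f g x = (L (\<lambda>y. f y * g y) x - f x * L g x - g x * L f x) / 2) \<and>
     \<comment> \<open>extended class D\<close>
     A \<subseteq> D \<and>
     (\<forall>f\<in>D. f \<in> borel_measurable M \<and> (\<exists>B. \<forall>x\<in>space M. \<bar>f x\<bar> \<le> B)) \<and>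
     (\<forall>c. \<forall>f\<in>D. \<forall>g\<in>D. (\<lambda>x. c * f x + g x) \<in> D \<and> (\<lambda>x. f x * g x) \<in> D) \<and>
     (\<forall>f\<in>D. \<forall>S \<Psi> \<Psi>'. open S \<and> closure (f ` space M) \<subseteq> S \<and>
        (\<forall>y\<in>S. (\<Psi> has_real_derivative \<Psi>' y) (at y)) \<and> continuous_on S \<Psi>'
        \<longrightarrow> (\<lambda>x. \<Psi> (f x)) \<in> D \<and>
            (\<forall>g\<in>D. \<forall>x\<in>space M. G (\<lambda>y. \<Psi> (f y)) g x = \<Psi>' (f x) * G f g x)) \<and>
     \<comment> \<open>G on D: symmetric, nonnegative, bilinear, derivation, measurable and integrable\<close>
     (\<forall>f\<in>D. \<forall>g\<in>D. \<forall>x\<in>space M. G f g x = G g f x) \<and>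
     (\<forall>f\<in>D. \<forall>x\<in>space M. G f f x \<ge> 0) \<and>
     (\<forall>c. \<forall>f\<in>D. \<forall>g\<in>D. \<forall>h\<in>D. \<forall>x\<in>space M.
        G (\<lambda>y. c * f y + g y) h x = c * G f h x + G g h x) \<and>
     (\<forall>f\<in>D. \<forall>g\<in>D. \<forall>h\<in>D. \<forall>x\<in>space M.
        G (\<lambda>y. f y * g y) h x = f x * G g h x + g x * G f h x) \<and>
     (\<forall>f\<in>D. \<forall>g\<in>D. integrable M (G f g)) \<and>
     \<comment> \<open>integration by parts\<close>
     (\<forall>f\<in>A. \<forall>h\<in>D. integrable M (\<lambda>x. h x * L f x) \<and>
        (\<integral>x. G f h x \<partial>M) = - (\<integral>x. h x * L f x \<partial>M))"

definition local_poincare ::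
  "'a measure \<Rightarrow> ('a \<Rightarrow> real) set
   \<Rightarrow> (('a \<Rightarrow> real) \<Rightarrow> ('a \<Rightarrow> real) \<Rightarrow> ('a \<Rightarrow> real)) \<Rightarrow> 'a set \<Rightarrow> real \<Rightarrow> bool" where
  "local_poincare M A G U \<kappa> \<longleftrightarrow>
     (\<forall>f\<in>A. (\<integral>x. indicator U x * (f x)\<^sup>2 \<partial>M)
        \<le> \<kappa> * (\<integral>x. G f f x \<partial>M)
          + (1 / measure M U) * (\<integral>x. indicator U x * f x \<partial>M)\<^sup>2)"

end

theory Submission
  imports Defs
begin

(* Let c be the mean of g over U and h = (g - c)^2 / phi(W).  Since h >= 0 and
   phi(W) <= -LW + b 1_U, we get (g - c)^2 <= -h LW + b 1_U h pointwise.  Integrating,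
   -int h LW = int Gamma(h, W) by integration by parts, and the chain and Leibniz rules give
     Gamma(h, W) = 2 (g - c)/phi(W) Gamma(g, W) - (g - c)^2 phi'(W)/phi(W)^2 Gamma(W),
   which is at most Gamma(g)/phi'(W) by positivity of the quadratic form
   s |-> Gamma(s W + g).  Since phi is increasing and W >= 1, 1_U h <= 1_U (g - c)^2 / phi(1),
   and the local Poincare inequality, rewritten in centred form, bounds int_U (g - c)^2
   by kappa int Gamma(g).  Finally Var(g) <= int (g - c)^2 for every constant c. *)

(* Cauchy-Schwarz for a nonnegative quadratic form: evaluating s^2 GW + 2 s GgW + Gg >= 0
   at s = -a p bounds the cross term produced by differentiating h along W. *)
lemma quadratic_form_bound:
  fixes GW GgW Gg a p :: real
  assumes "p > 0" "\<And>s. s\<^sup>2 * GW + 2 * s * GgW + Gg \<ge> 0"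
  shows "- a\<^sup>2 * p * GW + 2 * a * GgW \<le> Gg / p"
proof -
  have "(-a*p)\<^sup>2 * GW + 2 * (-a*p) * GgW + Gg \<ge> 0" using assms(2) .
  hence "p * (- a\<^sup>2 * p * GW + 2 * a * GgW) \<le> Gg"
    by (simp add: power2_eq_square algebra_simps)
  thus ?thesis using assms(1) by (simp add: field_simps mult.commute)
qed

lemma combine_bounds:
  fixes V E0 E1 \<beta> P \<kappa> :: real
  assumes V: "V \<le> E1 + \<beta> * P" and P: "P \<le> \<kappa> * E0"
    and nonneg: "\<beta> \<ge> 0" "E0 \<ge> 0" "E1 \<ge> 0"
  shows "V \<le> max (\<beta> * \<kappa>) 1 * (E0 + E1)"
proof -
  have "V \<le> E1 + (\<beta> * \<kappa>) * E0"
    using V mult_left_mono[OF P nonneg(1)] by (simp add: mult.assoc)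
  also have "\<dots> \<le> max (\<beta> * \<kappa>) 1 * E1 + max (\<beta> * \<kappa>) 1 * E0"
    using mult_right_mono[of 1 "max (\<beta> * \<kappa>) 1" E1] mult_right_mono[of "\<beta> * \<kappa>" "max (\<beta> * \<kappa>) 1" E0]
      nonneg by (intro add_mono) auto
  finally show ?thesis by (simp add: algebra_simps)
qed

lemma positive_continuous_bounded_below:
  fixes \<psi> :: "'a::topological_space \<Rightarrow> real"
  assumes "compact T" "continuous_on T \<psi>" "\<forall>t\<in>T. \<psi> t > 0"
  shows "\<exists>m>0. \<forall>t\<in>T. \<psi> t \<ge> m"
proof (cases "T = {}")
  case False
  then obtain t0 where "t0 \<in> T" "\<forall>t\<in>T. \<psi> t0 \<le> \<psi> t"
    using continuous_attains_inf assms by blast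
  then show ?thesis using assms(3) by blast
qed (auto intro: exI[of _ 1])

lemma set_integral_shifted_square:
  fixes f :: "'a \<Rightarrow> real"
  assumes M: "finite_measure M" and U: "U \<in> sets M"
    and f: "integrable M f" and f2: "integrable M (\<lambda>x. (f x)\<^sup>2)"
  shows "(\<integral>x. indicator U x * (f x - c)\<^sup>2 \<partial>M)
       = (\<integral>x. indicator U x * (f x)\<^sup>2 \<partial>M) - 2 * c * (\<integral>x. indicator U x * f x \<partial>M)
         + c\<^sup>2 * measure M U"
proof -
  have fU: "integrable M (\<lambda>x. indicator U x * f x)"
    using integrable_mult_indicator[OF U f] by simp
  have f2U: "integrable M (\<lambda>x. indicator U x * (f x)\<^sup>2)"
    using integrable_mult_indicator[OF U f2] by simp
  have 1: "integrable M (\<lambda>x. indicator U x :: real)"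
    using integrable_mult_indicator[OF U finite_measure.integrable_const[OF M, of "1::real"]] by simp
  have "(\<integral>x. indicator U x * (f x - c)\<^sup>2 \<partial>M)
      = (\<integral>x. indicator U x * (f x)\<^sup>2 - 2 * c * (indicator U x * f x) + c\<^sup>2 * indicator U x \<partial>M)"
    by (rule Bochner_Integration.integral_cong) (auto simp: power2_eq_square algebra_simps)
  also have "\<dots> = (\<integral>x. indicator U x * (f x)\<^sup>2 \<partial>M) - 2 * c * (\<integral>x. indicator U x * f x \<partial>M)
         + c\<^sup>2 * measure M U"
    using fU f2U 1 U by simp
  finally show ?thesis .
qed

lemma variance_le_mean_square_deviation:
  fixes f :: "'a \<Rightarrow> real"
  assumes M: "prob_space M" and f: "integrable M f" and f2: "integrable M (\<lambda>x. (f x)\<^sup>2)"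
  shows "(\<integral>x. (f x - (\<integral>y. f y \<partial>M))\<^sup>2 \<partial>M) \<le> (\<integral>x. (f x - c)\<^sup>2 \<partial>M)"
proof -
  have fm: "finite_measure M" using M by (rule prob_space.finite_measure)
  have one: "measure M (space M) = 1" using M by (rule prob_space.prob_space)
  have shift: "(\<integral>x. (f x - a)\<^sup>2 \<partial>M)
       = (\<integral>x. (f x)\<^sup>2 \<partial>M) - 2 * a * (\<integral>x. f x \<partial>M) + a\<^sup>2" for a
  proof -
    have "(\<integral>x. (f x - a)\<^sup>2 \<partial>M) = (\<integral>x. indicator (space M) x * (f x - a)\<^sup>2 \<partial>M)"
      by (rule Bochner_Integration.integral_cong) auto
    also have "\<dots> = (\<integral>x. indicator (space M) x * (f x)\<^sup>2 \<partial>M)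
        - 2 * a * (\<integral>x. indicator (space M) x * f x \<partial>M) + a\<^sup>2"
      using set_integral_shifted_square[OF fm sets.top f f2] one by simp
    also have "\<dots> = (\<integral>x. (f x)\<^sup>2 \<partial>M) - 2 * a * (\<integral>x. f x \<partial>M) + a\<^sup>2"
      by (simp cong: Bochner_Integration.integral_cong)
    finally show ?thesis .
  qed
  show ?thesis
    unfolding shift[of c] shift[of "\<integral>y. f y \<partial>M"]
    using zero_le_power2[of "(\<integral>y. f y \<partial>M) - c"] by (simp add: power2_eq_square algebra_simps)
qed

(* The local Poincare inequality in centred form: with c the mean of f over U,
   int_U (f - c)^2 <= kappa int Gamma(f).  (If mu(U) = 0 then c = 0 and both sides agree.) *)
lemma local_poincare_centered:
  fixes f :: "'a \<Rightarrow> real"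
  assumes M: "finite_measure M" and U: "U \<in> sets M" and P: "local_poincare M A G U \<kappa>"
    and fA: "f \<in> A" and f: "integrable M f" and f2: "integrable M (\<lambda>x. (f x)\<^sup>2)"
  shows "(\<integral>x. indicator U x * (f x - (\<integral>y. indicator U y * f y \<partial>M) / measure M U)\<^sup>2 \<partial>M)
           \<le> \<kappa> * (\<integral>x. G f f x \<partial>M)"
proof -
  define I where "I = (\<integral>y. indicator U y * f y \<partial>M)"
  have "(\<integral>x. indicator U x * (f x - I / measure M U)\<^sup>2 \<partial>M)
      = (\<integral>x. indicator U x * (f x)\<^sup>2 \<partial>M) - 2 * (I / measure M U) * I
        + (I / measure M U)\<^sup>2 * measure M U"
    unfolding I_def by (rule set_integral_shifted_square[OF M U f f2])
  also have "\<dots> = (\<integral>x. indicator U x * (f x)\<^sup>2 \<partial>M) - (1 / measure M U) * I\<^sup>2"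
    by (cases "measure M U = 0") (simp_all add: field_simps power2_eq_square)
  also have "\<dots> \<le> \<kappa> * (\<integral>x. G f f x \<partial>M)"
    using P fA unfolding local_poincare_def I_def by force
  finally show ?thesis unfolding I_def .
qed

locale diffusion =
  fixes M :: "'a::polish_space measure"
    and A D :: "('a \<Rightarrow> real) set"
    and L :: "('a \<Rightarrow> real) \<Rightarrow> ('a \<Rightarrow> real)"
    and G :: "('a \<Rightarrow> real) \<Rightarrow> ('a \<Rightarrow> real) \<Rightarrow> ('a \<Rightarrow> real)"
  assumes prob_space_M: "prob_space M"
    and A_subset_D: "A \<subseteq> D"
    and D_measurable_bounded:
      "\<forall>f\<in>D. f \<in> borel_measurable M \<and> (\<exists>B. \<forall>x\<in>space M. \<bar>f x\<bar> \<le> B)"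
    and D_closed: "\<forall>c. \<forall>f\<in>D. \<forall>g\<in>D. (\<lambda>x. c * f x + g x) \<in> D \<and> (\<lambda>x. f x * g x) \<in> D"
    and D_chain: "\<forall>f\<in>D. \<forall>S \<Psi> \<Psi>'. open S \<and> closure (f ` space M) \<subseteq> S \<and>
        (\<forall>y\<in>S. (\<Psi> has_real_derivative \<Psi>' y) (at y)) \<and> continuous_on S \<Psi>'
        \<longrightarrow> (\<lambda>x. \<Psi> (f x)) \<in> D \<and>
            (\<forall>g\<in>D. \<forall>x\<in>space M. G (\<lambda>y. \<Psi> (f y)) g x = \<Psi>' (f x) * G f g x)"
    and G_symmetric: "\<forall>f\<in>D. \<forall>g\<in>D. \<forall>x\<in>space M. G f g x = G g f x"
    and G_positive: "\<forall>f\<in>D. \<forall>x\<in>space M. G f f x \<ge> 0"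
    and G_linear: "\<forall>c. \<forall>f\<in>D. \<forall>g\<in>D. \<forall>h\<in>D. \<forall>x\<in>space M.
        G (\<lambda>y. c * f y + g y) h x = c * G f h x + G g h x"
    and G_derivation: "\<forall>f\<in>D. \<forall>g\<in>D. \<forall>h\<in>D. \<forall>x\<in>space M.
        G (\<lambda>y. f y * g y) h x = f x * G g h x + g x * G f h x"
    and G_integrable_on_D: "\<forall>f\<in>D. \<forall>g\<in>D. integrable M (G f g)"
    and integration_by_parts_on_A: "\<forall>f\<in>A. \<forall>h\<in>D. integrable M (\<lambda>x. h x * L f x) \<and>
        (\<integral>x. G f h x \<partial>M) = - (\<integral>x. h x * L f x \<partial>M)"

lemma diffusion_framework_imp_diffusion:
  "diffusion_framework M A D L G \<Longrightarrow> diffusion M A D L G"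
  unfolding diffusion_framework_def diffusion_def by (elim conjE) (intro conjI; assumption)

context diffusion
begin

lemma D_measurable: "f \<in> D \<Longrightarrow> f \<in> borel_measurable M"
  using D_measurable_bounded by blast

lemma finite_measure_M: "finite_measure M"
  using prob_space_M by (rule prob_space.finite_measure)

lemma D_integrable:
  assumes "f \<in> D"
  shows "integrable M f"
proof -
  obtain B where "\<forall>x\<in>space M. \<bar>f x\<bar> \<le> B"
    using D_measurable_bounded assms by blast
  then show ?thesis
    using finite_measure_M D_measurable[OF assms]
    by (intro finite_measure.integrable_const_bound[where B=B]) auto
qed

lemma D_lincomb: "f \<in> D \<Longrightarrow> g \<in> D \<Longrightarrow> (\<lambda>x. c * f x + g x) \<in> D"
  using D_closed by blast

lemma D_mult: "f \<in> D \<Longrightarrow> g \<in> D \<Longrightarrow> (\<lambda>x. f x * g x) \<in> D"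
  using D_closed by blast

lemma D_chain_rule:
  assumes "f \<in> D" "open S" "closure (f ` space M) \<subseteq> S"
    and "\<forall>y\<in>S. (\<Psi> has_real_derivative \<Psi>' y) (at y)" "continuous_on S \<Psi>'"
  shows "(\<lambda>x. \<Psi> (f x)) \<in> D"
    and "h \<in> D \<Longrightarrow> x \<in> space M \<Longrightarrow> G (\<lambda>y. \<Psi> (f y)) h x = \<Psi>' (f x) * G f h x"
  using D_chain assms by blast+

lemma G_sym: "f \<in> D \<Longrightarrow> g \<in> D \<Longrightarrow> x \<in> space M \<Longrightarrow> G f g x = G g f x"
  using G_symmetric by blast

lemma G_nonneg: "f \<in> D \<Longrightarrow> x \<in> space M \<Longrightarrow> G f f x \<ge> 0"
  using G_positive by blast

lemma G_lincomb:
  "f \<in> D \<Longrightarrow> g \<in> D \<Longrightarrow> h \<in> D \<Longrightarrow> x \<in> space M \<Longrightarrow>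
     G (\<lambda>y. c * f y + g y) h x = c * G f h x + G g h x"
  using G_linear by blast

lemma G_mult:
  "f \<in> D \<Longrightarrow> g \<in> D \<Longrightarrow> h \<in> D \<Longrightarrow> x \<in> space M \<Longrightarrow>
     G (\<lambda>y. f y * g y) h x = f x * G g h x + g x * G f h x"
  using G_derivation by blast

lemma G_integrable: "f \<in> D \<Longrightarrow> g \<in> D \<Longrightarrow> integrable M (G f g)"
  using G_integrable_on_D by blast

lemma integration_by_parts:
  assumes "f \<in> A" "h \<in> D"
  shows "integrable M (\<lambda>x. h x * L f x)" and "(\<integral>x. G f h x \<partial>M) = - (\<integral>x. h x * L f x \<partial>M)"
  using integration_by_parts_on_A assms by blast+

lemma G_quadratic_nonneg:
  assumes f: "f \<in> D" and g: "g \<in> D" and x: "x \<in> space M"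
  shows "s\<^sup>2 * G f f x + 2 * s * G g f x + G g g x \<ge> 0"
proof -
  define u where "u = (\<lambda>y. s * f y + g y)"
  have u: "u \<in> D" unfolding u_def using D_lincomb f g .
  have "G u u x = s * G f u x + G g u x"
    unfolding u_def using G_lincomb f g u x by (simp add: u_def)
  also have "\<dots> = s * G u f x + G u g x"
    using G_sym f g u x by simp
  also have "\<dots> = s\<^sup>2 * G f f x + 2 * s * G g f x + G g g x"
    unfolding u_def using G_lincomb f g x G_sym[OF f g x]
    by (simp add: power2_eq_square algebra_simps)
  finally show ?thesis using G_nonneg[OF u x] by simp
qed

lemma shifted_square_in_D: "g \<in> D \<Longrightarrow> (\<lambda>x. (g x - c)\<^sup>2) \<in> D"
  and G_shifted_square: "g \<in> D \<Longrightarrow> h \<in> D \<Longrightarrow> x \<in> space M \<Longrightarrow>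
     G (\<lambda>y. (g y - c)\<^sup>2) h x = 2 * (g x - c) * G g h x"
  by (rule D_chain_rule[where S=UNIV and \<Psi>'="\<lambda>t. 2 * (t - c)"];
      auto intro!: derivative_eq_intros continuous_intros)+

end

locale lyapunov_setting = diffusion M A D L G
  for M :: "'a::polish_space measure" and A D L G +
  fixes W :: "'a \<Rightarrow> real" and \<phi> \<phi>' :: "real \<Rightarrow> real"
  assumes W_A: "W \<in> A" and W_ge: "\<forall>x\<in>space M. W x \<ge> 1"
    and phi_pos: "\<forall>t>0. \<phi> t > 0"
    and phi_deriv: "\<forall>t>0. (\<phi> has_real_derivative \<phi>' t) (at t)"
    and phi'_cont: "continuous_on {0<..} \<phi>'"
    and phi'_pos: "\<forall>t>0. \<phi>' t > 0"
begin

lemma W_D: "W \<in> D"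
  using W_A A_subset_D by blast

lemma closure_range_W: "closure (W ` space M) \<subseteq> {0<..}"
proof -
  have "closure (W ` space M) \<subseteq> {1..}"
    by (rule closure_minimal) (use W_ge in auto)
  then show ?thesis by auto
qed

lemma phi_continuous: "continuous_on {0<..} \<phi>"
  using phi_deriv by (meson DERIV_isCont continuous_at_imp_continuous_on greaterThan_iff)

(* Chain rule for the weight 1/phi(W); needs the closure of the range of W inside the
   domain (0, infinity) of phi. *)
lemma inverse_phi_W_in_D: "(\<lambda>x. 1 / \<phi> (W x)) \<in> D"
  and G_inverse_phi_W: "h \<in> D \<Longrightarrow> x \<in> space M \<Longrightarrow>
     G (\<lambda>y. 1 / \<phi> (W y)) h x = - \<phi>' (W x) / (\<phi> (W x))\<^sup>2 * G W h x"
proof -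
  have deriv: "\<forall>y\<in>{0<..}. ((\<lambda>t. 1 / \<phi> t) has_real_derivative - \<phi>' y / (\<phi> y)\<^sup>2) (at y)"
  proof
    fix y :: real assume "y \<in> {0<..}"
    then have "((\<lambda>t. inverse (\<phi> t)) has_real_derivative - (inverse (\<phi> y) * \<phi>' y * inverse (\<phi> y))) (at y)"
      using phi_deriv phi_pos by (intro DERIV_inverse') auto
    then show "((\<lambda>t. 1 / \<phi> t) has_real_derivative - \<phi>' y / (\<phi> y)\<^sup>2) (at y)"
      by (simp add: divide_inverse power2_eq_square mult.commute mult.left_commute)
  qed
  have cont: "continuous_on {0<..} (\<lambda>t. - \<phi>' t / (\<phi> t)\<^sup>2)"
    using phi_continuous phi'_cont phi_pos by (intro continuous_intros) auto
  show "(\<lambda>x. 1 / \<phi> (W x)) \<in> D"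
    using D_chain_rule(1)[OF W_D _ closure_range_W deriv cont] by simp
  show "h \<in> D \<Longrightarrow> x \<in> space M \<Longrightarrow>
     G (\<lambda>y. 1 / \<phi> (W y)) h x = - \<phi>' (W x) / (\<phi> (W x))\<^sup>2 * G W h x"
    using D_chain_rule(2)[OF W_D _ closure_range_W deriv cont] by simp
qed

definition weighted_square :: "('a \<Rightarrow> real) \<Rightarrow> real \<Rightarrow> 'a \<Rightarrow> real" where
  "weighted_square g c x = (g x - c)\<^sup>2 / \<phi> (W x)"

lemma weighted_square_as_product:
  "weighted_square g c = (\<lambda>x. (g x - c)\<^sup>2 * (1 / \<phi> (W x)))"
  by (simp add: weighted_square_def fun_eq_iff)

lemma weighted_square_in_D: "g \<in> D \<Longrightarrow> weighted_square g c \<in> D"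
  unfolding weighted_square_as_product
  using D_mult shifted_square_in_D inverse_phi_W_in_D by blast

lemma G_weighted_square_bound:
  assumes g: "g \<in> D" and x: "x \<in> space M"
  shows "G (weighted_square g c) W x \<le> G g g x / \<phi>' (W x)"
proof -
  have Wx: "W x \<ge> 1" using W_ge x by blast
  have pos: "\<phi>' (W x) > 0" "\<phi> (W x) > 0" using phi'_pos phi_pos Wx by auto
  have "G (weighted_square g c) W x
      = (g x - c)\<^sup>2 * G (\<lambda>y. 1 / \<phi> (W y)) W x + (1 / \<phi> (W x)) * G (\<lambda>y. (g y - c)\<^sup>2) W x"
    unfolding weighted_square_as_product
    using G_mult shifted_square_in_D[OF g] inverse_phi_W_in_D W_D x by blast
  also have "\<dots> = (g x - c)\<^sup>2 * (- \<phi>' (W x) / (\<phi> (W x))\<^sup>2 * G W W x)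
                  + (1 / \<phi> (W x)) * (2 * (g x - c) * G g W x)"
    using G_inverse_phi_W[OF W_D x] G_shifted_square[where c=c, OF g W_D x] by simp
  also have "\<dots> = - ((g x - c) / \<phi> (W x))\<^sup>2 * \<phi>' (W x) * G W W x
                  + 2 * ((g x - c) / \<phi> (W x)) * G g W x"
    by (simp add: power_divide field_simps)
  also have "\<dots> \<le> G g g x / \<phi>' (W x)"
    using quadratic_form_bound[OF pos(1) G_quadratic_nonneg[OF W_D g x]] .
  finally show ?thesis .
qed

(* W is bounded, so phi'(W) stays away from 0; hence Gamma(g)/phi'(W) is integrable. *)
lemma phi'_W_bounded_below: "\<exists>m>0. \<forall>x\<in>space M. \<phi>' (W x) \<ge> m"
proof -
  obtain B where B: "\<forall>x\<in>space M. \<bar>W x\<bar> \<le> B"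
    using D_measurable_bounded W_D by blast
  have "continuous_on {1..max B 1} \<phi>'"
    using phi'_cont by (rule continuous_on_subset) auto
  then obtain m where "m > 0" "\<forall>t\<in>{1..max B 1}. \<phi>' t \<ge> m"
    using positive_continuous_bounded_below[of "{1..max B 1}" \<phi>'] phi'_pos by auto
  moreover have "W x \<in> {1..max B 1}" if "x \<in> space M" for x
    using W_ge B that by force
  ultimately show ?thesis by blast
qed

lemma phi'_W_measurable: "(\<lambda>x. \<phi>' (W x)) \<in> borel_measurable M"
proof -
  have "continuous_on UNIV (\<lambda>t. \<phi>' (max t 1))"
    by (rule continuous_on_compose2[OF phi'_cont]) (auto intro!: continuous_intros)
  then have "(\<lambda>t. \<phi>' (max t 1)) \<in> borel_measurable borel"
    by (rule borel_measurable_continuous_onI)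
  then have "(\<lambda>x. \<phi>' (max (W x) 1)) \<in> borel_measurable M"
    using D_measurable[OF W_D] by (rule measurable_compose[rotated])
  moreover have "\<forall>x\<in>space M. \<phi>' (max (W x) 1) = \<phi>' (W x)"
    using W_ge by (force simp: max_def)
  ultimately show ?thesis by (simp cong: measurable_cong)
qed

lemma weighted_energy_integrable:
  assumes g: "g \<in> D"
  shows "integrable M (\<lambda>x. G g g x / \<phi>' (W x))"
proof -
  obtain m where m: "m > 0" "\<forall>x\<in>space M. \<phi>' (W x) \<ge> m"
    using phi'_W_bounded_below by blast
  show ?thesis
  proof (rule Bochner_Integration.integrable_bound)
    show "integrable M (\<lambda>x. (1 / m) * G g g x)"
      using G_integrable[OF g g] by simp
    show "(\<lambda>x. G g g x / \<phi>' (W x)) \<in> borel_measurable M"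
      using G_integrable[OF g g] phi'_W_measurable by measurable
    show "AE x in M. norm (G g g x / \<phi>' (W x)) \<le> norm ((1 / m) * G g g x)"
    proof (rule AE_I2)
      fix x assume x: "x \<in> space M"
      then have "\<phi>' (W x) \<ge> m" using m by blast
      then show "norm (G g g x / \<phi>' (W x)) \<le> norm ((1 / m) * G g g x)"
        using m(1) G_nonneg[OF g x] by (simp add: divide_simps mult_left_mono)
    qed
  qed
qed

(* Integration by parts turns -int h LW into int Gamma(h, W), bounded by the key estimate. *)
lemma dissipation_bound:
  assumes g: "g \<in> D"
  shows "- (\<integral>x. weighted_square g c x * L W x \<partial>M) \<le> (\<integral>x. G g g x / \<phi>' (W x) \<partial>M)"
proof -
  have h: "weighted_square g c \<in> D" using weighted_square_in_D[OF g] .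
  have "- (\<integral>x. weighted_square g c x * L W x \<partial>M) = (\<integral>x. G W (weighted_square g c) x \<partial>M)"
    using integration_by_parts(2)[OF W_A h] by simp
  also have "\<dots> = (\<integral>x. G (weighted_square g c) W x \<partial>M)"
    using G_sym[OF W_D h] by (intro Bochner_Integration.integral_cong) auto
  also have "\<dots> \<le> (\<integral>x. G g g x / \<phi>' (W x) \<partial>M)"
    using G_integrable[OF h W_D] weighted_energy_integrable[OF g] G_weighted_square_bound[OF g]
    by (intro integral_mono) auto
  finally show ?thesis .
qed

(* The drift condition multiplied by h >= 0, with 1_K enlarged to 1_U. *)
lemma lyapunov_pointwise:
  assumes x: "x \<in> space M" and b: "b \<ge> 0" and KU: "K \<subseteq> U"
    and lyap: "L W x \<le> - \<phi> (W x) + b * indicator K x"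
  shows "(g x - c)\<^sup>2 \<le> - (weighted_square g c x * L W x) + b * (indicator U x * weighted_square g c x)"
proof -
  have pos: "\<phi> (W x) > 0" using phi_pos W_ge x by force
  have h: "weighted_square g c x \<ge> 0" using pos by (simp add: weighted_square_def)
  have "b * indicator K x \<le> b * indicator U x"
    using KU b by (auto simp: indicator_def)
  then have "\<phi> (W x) \<le> - L W x + b * indicator U x"
    using lyap by linarith
  then have "weighted_square g c x * \<phi> (W x) \<le> weighted_square g c x * (- L W x + b * indicator U x)"
    using h by (rule mult_left_mono)
  moreover have "weighted_square g c x * \<phi> (W x) = (g x - c)\<^sup>2"
    using pos by (simp add: weighted_square_def)
  ultimately show ?thesis by (simp add: algebra_simps)
qed

lemma weighted_square_le:
  assumes x: "x \<in> space M" and mono: "mono_on {0<..} \<phi>"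
  shows "weighted_square g c x \<le> (g x - c)\<^sup>2 / \<phi> 1"
proof -
  have "W x \<ge> 1" using W_ge x by blast
  then have "\<phi> 1 \<le> \<phi> (W x)" using mono_onD[OF mono, of 1 "W x"] by simp
  moreover have "\<phi> 1 > 0" using phi_pos by simp
  ultimately show ?thesis
    unfolding weighted_square_def by (intro divide_left_mono) auto
qed

lemma lyapunov_square_bound:
  assumes g: "g \<in> D" and mono: "mono_on {0<..} \<phi>" and b: "b \<ge> 0"
    and lyap: "\<forall>x\<in>space M. L W x \<le> - \<phi> (W x) + b * indicator K x"
    and U: "U \<in> sets M" and KU: "K \<subseteq> U"
  shows "(\<integral>x. (g x - c)\<^sup>2 \<partial>M)
           \<le> (\<integral>x. G g g x / \<phi>' (W x) \<partial>M) + b / \<phi> 1 * (\<integral>x. indicator U x * (g x - c)\<^sup>2 \<partial>M)"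
proof -
  let ?h = "weighted_square g c"
  have h: "?h \<in> D" using weighted_square_in_D[OF g] .
  have hL: "integrable M (\<lambda>x. ?h x * L W x)" using integration_by_parts(1)[OF W_A h] .
  have hU: "integrable M (\<lambda>x. indicator U x * ?h x)"
    using integrable_mult_indicator[OF U D_integrable[OF h]] by simp
  have sq: "integrable M (\<lambda>x. (g x - c)\<^sup>2)" using D_integrable[OF shifted_square_in_D[OF g]] .
  have sqU: "integrable M (\<lambda>x. indicator U x * (g x - c)\<^sup>2)"
    using integrable_mult_indicator[OF U sq] by simp
  have "(\<integral>x. (g x - c)\<^sup>2 \<partial>M) \<le> (\<integral>x. - (?h x * L W x) + b * (indicator U x * ?h x) \<partial>M)"
    using sq hL hU lyapunov_pointwise[OF _ b KU] lyap by (intro integral_mono) auto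
  also have "\<dots> = - (\<integral>x. ?h x * L W x \<partial>M) + b * (\<integral>x. indicator U x * ?h x \<partial>M)"
    using hL hU by simp
  also have "\<dots> \<le> (\<integral>x. G g g x / \<phi>' (W x) \<partial>M) + b * (\<integral>x. indicator U x * (g x - c)\<^sup>2 / \<phi> 1 \<partial>M)"
  proof -
    have "(\<integral>x. indicator U x * ?h x \<partial>M) \<le> (\<integral>x. indicator U x * (g x - c)\<^sup>2 / \<phi> 1 \<partial>M)"
      using hU sqU weighted_square_le[OF _ mono]
      by (intro integral_mono) (auto simp: indicator_def)
    then show ?thesis
      using dissipation_bound[OF g, of c] b by (smt (verit) mult_left_mono)
  qed
  also have "\<dots> = (\<integral>x. G g g x / \<phi>' (W x) \<partial>M) + b / \<phi> 1 * (\<integral>x. indicator U x * (g x - c)\<^sup>2 \<partial>M)"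
    by simp
  finally show ?thesis .
qed

lemma weighted_energy_nonneg:
  assumes g: "g \<in> D"
  shows "(\<integral>x. G g g x / \<phi>' (W x) \<partial>M) \<ge> 0"
proof (rule Bochner_Integration.integral_nonneg)
  fix x assume x: "x \<in> space M"
  then have "\<phi>' (W x) > 0" using W_ge phi'_pos by force
  then show "G g g x / \<phi>' (W x) \<ge> 0" using G_nonneg[OF g x] by simp
qed

lemma energy_split:
  assumes g: "g \<in> D"
  shows "(\<integral>x. (1 + 1 / \<phi>' (W x)) * G g g x \<partial>M)
           = (\<integral>x. G g g x \<partial>M) + (\<integral>x. G g g x / \<phi>' (W x) \<partial>M)"
proof -
  have "(\<integral>x. (1 + 1 / \<phi>' (W x)) * G g g x \<partial>M) = (\<integral>x. G g g x + G g g x / \<phi>' (W x) \<partial>M)"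
    by (simp add: distrib_right)
  also have "\<dots> = (\<integral>x. G g g x \<partial>M) + (\<integral>x. G g g x / \<phi>' (W x) \<partial>M)"
    using G_integrable[OF g g] weighted_energy_integrable[OF g] by simp
  finally show ?thesis .
qed

end

theorem mainTheorem1:
  fixes M :: "'a::polish_space measure"
    and A D :: "('a \<Rightarrow> real) set"
    and L :: "('a \<Rightarrow> real) \<Rightarrow> ('a \<Rightarrow> real)"
    and G :: "('a \<Rightarrow> real) \<Rightarrow> ('a \<Rightarrow> real) \<Rightarrow> ('a \<Rightarrow> real)"
    and W g :: "'a \<Rightarrow> real"
    and \<phi> \<phi>' :: "real \<Rightarrow> real"
    and K U :: "'a set"
    and b \<kappa> :: real
  assumes frame: "diffusion_framework M A D L G"
    and W_A: "W \<in> A" and W_ge: "\<forall>x\<in>space M. W x \<ge> 1"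
    and phi_pos: "\<forall>t>0. \<phi> t > 0"
    and phi_deriv: "\<forall>t>0. (\<phi> has_real_derivative \<phi>' t) (at t)"
    and phi'_cont: "continuous_on {0<..} \<phi>'"
    and phi'_pos: "\<forall>t>0. \<phi>' t > 0"
    and phi_mono: "mono_on {0<..} \<phi>"
    and b_nonneg: "b \<ge> 0"
    and lyap: "\<forall>x\<in>space M. L W x \<le> - \<phi> (W x) + b * indicator K x"
    and U_meas: "U \<in> sets M" and KU: "K \<subseteq> U"
    and poinc: "local_poincare M A G U \<kappa>"
    and g_A: "g \<in> A"
  shows "(\<integral>x. (g x - (\<integral>y. g y \<partial>M))\<^sup>2 \<partial>M)
           \<le> max (b * \<kappa> / \<phi> 1) 1 * (\<integral>x. (1 + 1 / \<phi>' (W x)) * G g g x \<partial>M)"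
proof -
  interpret lyapunov_setting M A D L G W \<phi> \<phi>'
    using diffusion_framework_imp_diffusion[OF frame] W_A W_ge phi_pos phi_deriv phi'_cont phi'_pos
    by (simp add: lyapunov_setting_def lyapunov_setting_axioms_def)
  have g: "g \<in> D" using g_A A_subset_D by blast
  have g2: "integrable M (\<lambda>x. (g x)\<^sup>2)"
    using D_integrable[OF D_mult[OF g g]] by (simp add: power2_eq_square)
  have phi1: "\<phi> 1 > 0" using phi_pos by simp
  define c where "c = (\<integral>y. indicator U y * g y \<partial>M) / measure M U"
  have "(\<integral>x. (g x - (\<integral>y. g y \<partial>M))\<^sup>2 \<partial>M) \<le> (\<integral>x. (g x - c)\<^sup>2 \<partial>M)"
    using variance_le_mean_square_deviation[OF prob_space_M D_integrable[OF g] g2] .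
  also have "\<dots> \<le> (\<integral>x. G g g x / \<phi>' (W x) \<partial>M)
                  + b / \<phi> 1 * (\<integral>x. indicator U x * (g x - c)\<^sup>2 \<partial>M)"
    using lyapunov_square_bound[OF g phi_mono b_nonneg lyap U_meas KU] .
  finally have "(\<integral>x. (g x - (\<integral>y. g y \<partial>M))\<^sup>2 \<partial>M)
      \<le> max (b / \<phi> 1 * \<kappa>) 1 * ((\<integral>x. G g g x \<partial>M) + (\<integral>x. G g g x / \<phi>' (W x) \<partial>M))"
    using local_poincare_centered[OF finite_measure_M U_meas poinc g_A D_integrable[OF g] g2]
      b_nonneg phi1 G_nonneg[OF g] weighted_energy_nonneg[OF g]
    unfolding c_def by (intro combine_bounds) (auto intro: Bochner_Integration.integral_nonneg)
  then show ?thesis by (simp add: energy_split[OF g])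
qed

end
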